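(* Let $\Phi:[a,b]\to\mathbb{R}$ be continuous and nowhere zero, let $x_0\in(a,b)$, and let $\mathcal S_n=\{\mathcal Y_0(x_0,x),\dots,\mathcal Y_n(x_0,x)\}$ and $\widetilde{\mathcal S}_n=\{\widetilde{\mathcal Y}_0(x_0,x),\dots,\widetilde{\mathcal Y}_n(x_0,x)\}$ (as functions of $x$) be of class $C^n(a,b)$. Then each of the sets $\mathcal S_n$ and $\widetilde{\mathcal S}_n$ is linearly independent (as functions on $(a,b)$).
   Context: For $x_0,x\in[a,b]$ the $\Phi$-power functions are defined recursively by $X^{(0)}(x_0,x)\equiv 1$, $\widetilde X^{(0)}(x_0,x)\equiv 1$ and, for $n\ge 1$, $$X^{(n)}(x_0,x)=n\int_{x_0}^x X^{(n-1)}(x_0,\xi)\,\big(\Phi(\xi)\big)^{(-1)^n}\,d\xi,\qquad \widetilde X^{(n)}(x_0,x)=n\int_{x_0}^x \widetilde X^{(n-1)}(x_0,\xi)\,\Big(\frac{1}{\Phi(\xi)}\Big)^{(-1)^n}\,d\xi.$$ For $n\ge0$, $\mathcal Y_n=\widetilde X^{(n)}$ if $n$ is odd and $\mathcal Y_n=X^{(n)}$ if $n$ is even; $\widetilde{\mathcal Y}_n=X^{(n)}$ if $n$ is odd and $\widetilde{\mathcal Y}_n=\widetilde X^{(n)}$ if $n$ is even. In this part of the paper $\Phi$ is assumed real-valued. *)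

theory Defs
  imports "HOL-Analysis.Analysis"
begin

definition oint :: "real \<Rightarrow> real \<Rightarrow> (real \<Rightarrow> real) \<Rightarrow> real" where
  "oint x0 x f = (if x0 \<le> x then integral {x0..x} f else - integral {x..x0} f)"

text \<open>(Phi xi) ^ ((-1)^n): Phi xi for n even, 1 / Phi xi for n odd.\<close>
definition altpow :: "real \<Rightarrow> nat \<Rightarrow> real" where
  "altpow y n = (if even n then y else 1 / y)"

fun Xpow :: "(real \<Rightarrow> real) \<Rightarrow> nat \<Rightarrow> real \<Rightarrow> real \<Rightarrow> real" where
  "Xpow \<Phi> 0 x0 x = 1"
| "Xpow \<Phi> (Suc n) x0 x =
     real (Suc n) * oint x0 x (\<lambda>\<xi>. Xpow \<Phi> n x0 \<xi> * altpow (\<Phi> \<xi>) (Suc n))"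

fun Xtpow :: "(real \<Rightarrow> real) \<Rightarrow> nat \<Rightarrow> real \<Rightarrow> real \<Rightarrow> real" where
  "Xtpow \<Phi> 0 x0 x = 1"
| "Xtpow \<Phi> (Suc n) x0 x =
     real (Suc n) * oint x0 x (\<lambda>\<xi>. Xtpow \<Phi> n x0 \<xi> * altpow (1 / \<Phi> \<xi>) (Suc n))"

definition Ypow :: "(real \<Rightarrow> real) \<Rightarrow> nat \<Rightarrow> real \<Rightarrow> real \<Rightarrow> real" where
  "Ypow \<Phi> n = (if odd n then Xtpow \<Phi> n else Xpow \<Phi> n)"

definition Ytpow :: "(real \<Rightarrow> real) \<Rightarrow> nat \<Rightarrow> real \<Rightarrow> real \<Rightarrow> real" where
  "Ytpow \<Phi> n = (if odd n then Xpow \<Phi> n else Xtpow \<Phi> n)"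

definition C_n_on :: "nat \<Rightarrow> real set \<Rightarrow> (real \<Rightarrow> real) \<Rightarrow> bool" where
  "C_n_on n S f \<longleftrightarrow>
     (\<forall>k<n. \<forall>x\<in>S. ((deriv ^^ k) f) differentiable (at x)) \<and>
     (\<forall>k\<le>n. continuous_on S ((deriv ^^ k) f))"

definition lin_indep_on :: "real set \<Rightarrow> nat \<Rightarrow> (nat \<Rightarrow> real \<Rightarrow> real) \<Rightarrow> bool" where
  "lin_indep_on S n g \<longleftrightarrow>
     (\<forall>c :: nat \<Rightarrow> real. (\<forall>x\<in>S. (\<Sum>k\<le>n. c k * g k x) = 0) \<longrightarrow> (\<forall>k\<le>n. c k = 0))"

end

theory Submission
  imports Defs
begin

text \<open>Since Phi is continuous and nowhere zero, the fundamental theorem of calculus gives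
  Y(k+1)' = (k+1) Phi Yt(k) and Yt(k+1)' = (k+1) Y(k) / Phi, where Y and Yt denote the two
  families; moreover Y(k+1) and Yt(k+1) vanish at x0, while Y(0) = Yt(0) = 1. Given a
  vanishing combination of Y(0), ..., Y(n+1), evaluation at x0 kills the coefficient of Y(0);
  differentiating and dividing by Phi then yields a vanishing combination of Yt(0), ..., Yt(n)
  with coefficients (k+1) c(k+1). A simultaneous induction on n for both families concludes.\<close>

lemma oint_eq_integral_diff:
  assumes g: "continuous_on {a..b} g" and x0: "x0 \<in> {a..b}" and x: "x \<in> {a..b}"
  shows "oint x0 x g = integral {a..x} g - integral {a..x0} g"
proof (cases "x0 \<le> x")
  case True
  have "integral {a..x0} g + integral {x0..x} g = integral {a..x} g"
    using Henstock_Kurzweil_Integration.integral_combine[where a=a and c=x0 and b=x and f=g] True x0 x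
      integrable_continuous_interval[OF continuous_on_subset[OF g, of "{a..x}"]] by auto
  then show ?thesis using True by (simp add: oint_def)
next
  case False
  have "integral {a..x} g + integral {x..x0} g = integral {a..x0} g"
    using Henstock_Kurzweil_Integration.integral_combine[where a=a and c=x and b=x0 and f=g] False x0 x
      integrable_continuous_interval[OF continuous_on_subset[OF g, of "{a..x0}"]] by auto
  then show ?thesis using False by (simp add: oint_def)
qed

lemma continuous_on_oint:
  assumes g: "continuous_on {a..b} g" and x0: "x0 \<in> {a..b}"
  shows "continuous_on {a..b} (\<lambda>x. oint x0 x g)"
proof -
  have "continuous_on {a..b} (\<lambda>x. integral {a..x} g - integral {a..x0} g)"
    by (intro continuous_intros indefinite_integral_continuous_1 integrable_continuous_interval g)
  then show ?thesis
    by (rule continuous_on_eq) (use oint_eq_integral_diff[OF g x0] in auto)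
qed

lemma has_real_derivative_oint:
  assumes g: "continuous_on {a..b} g" and x0: "x0 \<in> {a..b}" and x: "x \<in> {a<..<b}"
  shows "((\<lambda>x. oint x0 x g) has_real_derivative g x) (at x)"
proof -
  have "((\<lambda>x. integral {a..x} g - integral {a..x0} g) has_real_derivative g x - 0)
          (at x within {a..b})"
    using x by (intro derivative_intros integral_has_real_derivative g) auto
  then have "((\<lambda>x. integral {a..x} g - integral {a..x0} g) has_real_derivative g x) (at x)"
    using at_within_interior[of x "{a..b}"] x by simp
  then show ?thesis
    by (rule has_field_derivative_transform_within_open[where S="{a<..<b}"])
       (use x oint_eq_integral_diff[OF g x0] in auto)
qed

lemma continuous_on_altpow:
  assumes "continuous_on S f" and "\<forall>x\<in>S. f x \<noteq> 0"
  shows "continuous_on S (\<lambda>x. altpow (f x) k)"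
  using assms by (cases "even k") (auto simp: altpow_def intro!: continuous_intros)

lemma has_real_derivative_vanishing_on_open:
  assumes S: "open S" and x: "x \<in> S" and f: "\<forall>y\<in>S. f y = 0"
    and D: "(f has_real_derivative D) (at x)"
  shows "D = 0"
proof -
  have "((\<lambda>_. 0) has_real_derivative D) (at x)"
    by (rule has_field_derivative_transform_within_open[OF D S x]) (use f in auto)
  then show ?thesis
    using DERIV_const DERIV_unique by blast
qed

lemma lin_indep_on_Suc_by_derivative:
  fixes Y Z :: "nat \<Rightarrow> real \<Rightarrow> real" and p :: "real \<Rightarrow> real"
  assumes S: "open S" and x0: "x0 \<in> S"
    and Y0: "\<And>x. Y 0 x = 1" and Y_Suc_x0: "\<And>k. Y (Suc k) x0 = 0"
    and deriv: "\<And>x k. x \<in> S \<Longrightarrow> (Y (Suc k) has_real_derivative real (Suc k) * p x * Z k x) (at x)"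
    and p: "\<And>x. x \<in> S \<Longrightarrow> p x \<noteq> 0"
    and Z: "lin_indep_on S n Z"
  shows "lin_indep_on S (Suc n) Y"
  unfolding lin_indep_on_def
proof (rule allI, rule impI)
  fix c :: "nat \<Rightarrow> real"
  assume comb: "\<forall>x\<in>S. (\<Sum>k\<le>Suc n. c k * Y k x) = 0"
  have shift: "(\<Sum>k\<le>Suc n. c k * Y k x) = c 0 + (\<Sum>j\<le>n. c (Suc j) * Y (Suc j) x)" for x
    by (simp only: sum.atMost_Suc_shift Y0)
  have c0: "c 0 = 0"
    using comb[rule_format, OF x0] unfolding shift Y_Suc_x0 by simp
  have tail: "\<forall>x\<in>S. (\<Sum>j\<le>n. c (Suc j) * Y (Suc j) x) = 0"
    using comb unfolding shift c0 by simp
  have "\<forall>x\<in>S. (\<Sum>j\<le>n. (real (Suc j) * c (Suc j)) * Z j x) = 0"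
  proof
    fix x assume x: "x \<in> S"
    have "((\<lambda>x. \<Sum>j\<le>n. c (Suc j) * Y (Suc j) x) has_real_derivative
            p x * (\<Sum>j\<le>n. (real (Suc j) * c (Suc j)) * Z j x)) (at x)"
    proof -
      have "((\<lambda>x. \<Sum>j\<le>n. c (Suc j) * Y (Suc j) x) has_real_derivative
              (\<Sum>j\<le>n. c (Suc j) * (real (Suc j) * p x * Z j x))) (at x)"
        by (intro DERIV_sum DERIV_cmult deriv x)
      then show ?thesis
        by (simp add: sum_distrib_left mult_ac)
    qed
    then have "p x * (\<Sum>j\<le>n. (real (Suc j) * c (Suc j)) * Z j x) = 0"
      by (rule has_real_derivative_vanishing_on_open[OF S x tail])
    then show "(\<Sum>j\<le>n. (real (Suc j) * c (Suc j)) * Z j x) = 0"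
      using p[OF x] by simp
  qed
  then have "\<forall>j\<le>n. real (Suc j) * c (Suc j) = 0"
    using Z[unfolded lin_indep_on_def, rule_format, of "\<lambda>j. real (Suc j) * c (Suc j)"] by simp
  then have "\<forall>j\<le>n. c (Suc j) = 0"
    by simp
  then show "\<forall>k\<le>Suc n. c k = 0"
    using c0 by (metis Suc_le_mono not0_implies_Suc)
qed

context
  fixes \<Phi> :: "real \<Rightarrow> real" and a b x0 :: real
  assumes \<Phi>_cont: "continuous_on {a..b} \<Phi>" and \<Phi>_nz: "\<forall>x\<in>{a..b}. \<Phi> x \<noteq> 0"
    and x0: "x0 \<in> {a<..<b}"
begin

lemma continuous_on_inverse_\<Phi>: "continuous_on {a..b} (\<lambda>x. 1 / \<Phi> x)"
  using \<Phi>_cont \<Phi>_nz by (auto intro!: continuous_intros)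

lemma inverse_\<Phi>_nonzero: "\<forall>x\<in>{a..b}. 1 / \<Phi> x \<noteq> 0"
  using \<Phi>_nz by auto

lemma x0_in_closed_interval: "x0 \<in> {a..b}"
  using x0 by auto

lemma continuous_on_Xpow: "continuous_on {a..b} (\<lambda>x. Xpow \<Phi> n x0 x)"
proof (induction n)
  case (Suc n)
  show ?case
    unfolding Xpow.simps
    by (intro continuous_intros continuous_on_oint x0_in_closed_interval Suc
        continuous_on_altpow \<Phi>_cont \<Phi>_nz)
qed simp

lemma continuous_on_Xtpow: "continuous_on {a..b} (\<lambda>x. Xtpow \<Phi> n x0 x)"
proof (induction n)
  case (Suc n)
  show ?case
    unfolding Xtpow.simps
    by (intro continuous_intros continuous_on_oint x0_in_closed_interval Suc
        continuous_on_altpow continuous_on_inverse_\<Phi> inverse_\<Phi>_nonzero)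
qed simp

lemma has_real_derivative_Xpow_Suc:
  assumes x: "x \<in> {a<..<b}"
  shows "((\<lambda>x. Xpow \<Phi> (Suc n) x0 x) has_real_derivative
           real (Suc n) * (Xpow \<Phi> n x0 x * altpow (\<Phi> x) (Suc n))) (at x)"
  unfolding Xpow.simps
  by (intro DERIV_cmult has_real_derivative_oint[OF _ x0_in_closed_interval x] continuous_intros
      continuous_on_Xpow continuous_on_altpow \<Phi>_cont \<Phi>_nz)

lemma has_real_derivative_Xtpow_Suc:
  assumes x: "x \<in> {a<..<b}"
  shows "((\<lambda>x. Xtpow \<Phi> (Suc n) x0 x) has_real_derivative
           real (Suc n) * (Xtpow \<Phi> n x0 x * altpow (1 / \<Phi> x) (Suc n))) (at x)"
  unfolding Xtpow.simps
  by (intro DERIV_cmult has_real_derivative_oint[OF _ x0_in_closed_interval x] continuous_intros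
      continuous_on_Xtpow continuous_on_altpow continuous_on_inverse_\<Phi> inverse_\<Phi>_nonzero)

lemma has_real_derivative_Ypow_Suc:
  assumes x: "x \<in> {a<..<b}"
  shows "((\<lambda>x. Ypow \<Phi> (Suc k) x0 x) has_real_derivative
           real (Suc k) * \<Phi> x * Ytpow \<Phi> k x0 x) (at x)"
    and "((\<lambda>x. Ytpow \<Phi> (Suc k) x0 x) has_real_derivative
           real (Suc k) * (1 / \<Phi> x) * Ypow \<Phi> k x0 x) (at x)"
proof -
  have "\<Phi> x \<noteq> 0"
    using \<Phi>_nz x by auto
  note derivs = this has_real_derivative_Xpow_Suc[OF x, of k] has_real_derivative_Xtpow_Suc[OF x, of k]
  show "((\<lambda>x. Ypow \<Phi> (Suc k) x0 x) has_real_derivative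
          real (Suc k) * \<Phi> x * Ytpow \<Phi> k x0 x) (at x)"
    using derivs by (cases "even k") (auto simp: Ypow_def Ytpow_def altpow_def mult_ac)
  show "((\<lambda>x. Ytpow \<Phi> (Suc k) x0 x) has_real_derivative
          real (Suc k) * (1 / \<Phi> x) * Ypow \<Phi> k x0 x) (at x)"
    using derivs by (cases "even k") (auto simp: Ypow_def Ytpow_def altpow_def mult_ac)
qed

lemma lin_indep_on_Ypow_Ytpow:
  "lin_indep_on {a<..<b} n (\<lambda>k x. Ypow \<Phi> k x0 x) \<and> lin_indep_on {a<..<b} n (\<lambda>k x. Ytpow \<Phi> k x0 x)"
proof (induction n)
  case 0
  show ?case using x0 by (auto simp: lin_indep_on_def Ypow_def Ytpow_def)
next
  case (Suc n)
  have Y0: "Ypow \<Phi> 0 x0 x = 1" "Ytpow \<Phi> 0 x0 x = 1" for x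
    by (simp_all add: Ypow_def Ytpow_def)
  have Y_Suc_x0: "Ypow \<Phi> (Suc k) x0 x0 = 0" "Ytpow \<Phi> (Suc k) x0 x0 = 0" for k
    by (simp_all add: Ypow_def Ytpow_def oint_def)
  have \<Phi>_nz': "\<Phi> x \<noteq> 0" "1 / \<Phi> x \<noteq> 0" if "x \<in> {a<..<b}" for x
    using \<Phi>_nz that by auto
  show ?case
  proof
    show "lin_indep_on {a<..<b} (Suc n) (\<lambda>k x. Ypow \<Phi> k x0 x)"
      using Suc.IH
      by (intro lin_indep_on_Suc_by_derivative[OF open_greaterThanLessThan x0 Y0(1) Y_Suc_x0(1)
          has_real_derivative_Ypow_Suc(1) \<Phi>_nz'(1)]) simp_all
    show "lin_indep_on {a<..<b} (Suc n) (\<lambda>k x. Ytpow \<Phi> k x0 x)"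
      using Suc.IH
      by (intro lin_indep_on_Suc_by_derivative[OF open_greaterThanLessThan x0 Y0(2) Y_Suc_x0(2)
          has_real_derivative_Ypow_Suc(2) \<Phi>_nz'(2)]) simp_all
  qed
qed

end

theorem proposition2:
  fixes \<Phi> :: "real \<Rightarrow> real" and a b x0 :: real and n :: nat
  assumes "continuous_on {a..b} \<Phi>"
    and "\<forall>x\<in>{a..b}. \<Phi> x \<noteq> 0"
    and "x0 \<in> {a<..<b}"
    and "\<forall>k\<le>n. C_n_on n {a<..<b} (\<lambda>x. Ypow \<Phi> k x0 x)"
    and "\<forall>k\<le>n. C_n_on n {a<..<b} (\<lambda>x. Ytpow \<Phi> k x0 x)"
  shows "lin_indep_on {a<..<b} n (\<lambda>k x. Ypow \<Phi> k x0 x)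
       \<and> lin_indep_on {a<..<b} n (\<lambda>k x. Ytpow \<Phi> k x0 x)"
  using lin_indep_on_Ypow_Ytpow[OF assms(1-3)] .

end
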